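(* Let $0<r<\infty$, $N\in\mathbb N$, and for each of the seven types $R_N=A_N,B_N,B_N^\vee,C_N,C_N^\vee,BC_N,D_N$ consider the determinantal point process whose correlation kernel at time $t\in(0,t_\ast)$ is $K_t^{R_N}(x,y;t_\ast,r)=\sum_{n=1}^N \frac{1}{m^{R_N}_n(t_\ast)}M^{R_N}_n(x,t)\overline{M^{R_N}_n(y,t_\ast-t)}$ (on $[0,2\pi r)$ for $A_N$, on $[0,\pi r]$ otherwise). Put $t=t_\ast/2$. In the limit $t_\ast\to\infty$, these seven determinantal point processes degenerate into four types of determinantal point processes, with correlation kernels $K^{A_N}(x,y;r)=\frac{1}{2\pi r}\frac{\sin\{N(x-y)/2r\}}{\sin\{(x-y)/2r\}}$, $x,y\in[0,2\pi r)$ (limit for $A_N$); $K^{B_N}(x,y;r)=\frac{1}{2\pi r}\Big[\frac{\sin\{N(x-y)/r\}}{\sin\{(x-y)/2r\}}-\frac{\sin\{N(x+y)/r\}}{\sin\{(x+y)/2r\}}\Big]$, $x,y\in[0,\pi r]$ (common limit for $B_N$, $BC_N$, $C_N^\vee$); $K^{C_N}(x,y;r)=\frac{1}{2\pi r}\Big[\frac{\sin\{(2N+1)(x-y)/2r\}}{\sin\{(x-y)/2r\}}-\frac{\sin\{(2N+1)(x+y)/2r\}}{\sin\{(x+y)/2r\}}\Big]$, $x,y\in[0,\pi r]$ (common limit for $C_N$, $B_N^\vee$); $K^{D_N}(x,y;r)=\frac{1}{2\pi r}\Big[\frac{\sin\{(2N-1)(x-y)/2r\}}{\sin\{(x-y)/2r\}}+\frac{\sin\{(2N-1)(x+y)/2r\}}{\sin\{(x+y)/2r\}}\Big]$,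 $x,y\in[0,\pi r]$ (limit for $D_N$).
   Context: Jacobi theta functions: $\vartheta_1(v;\tau)=2\sum_{n\ge1}(-1)^{n-1}e^{\tau\pi i(n-1/2)^2}\sin\{(2n-1)\pi v\}$, $\vartheta_2(v;\tau)=2\sum_{n\ge1}e^{\tau\pi i(n-1/2)^2}\cos\{(2n-1)\pi v\}$, $\Im\tau>0$. Set $\xi(x)=x/(2\pi r)$, $\tau(t)=it/(2\pi r^2)$. Let $J^{R_N}(j)=j-1/2$ for $A_N,C_N^\vee$; $j-1$ for $B_N,B_N^\vee,D_N$; $j$ for $C_N,BC_N$. Let $\mathcal N^{R_N}=N$ ($A_N$), $2N-1$ ($B_N$), $2N$ ($B_N^\vee,C_N^\vee$), $2(N+1)$ ($C_N$), $2N+1$ ($BC_N$), $2(N-1)$ ($D_N$). Writing $J=J^{R_N}(j)$, $\mathcal N=\mathcal N^{R_N}$: $M^{A_N}_j(x,t)=e^{2\pi iJ\xi(x)}\vartheta_2(\mathcal N\{J\tau(t)+\xi(x)\};\mathcal N^2\tau(t))$; for $B_N,B_N^\vee$: $M_j=e^{2\pi iJ\xi(x)}\vartheta_1(\mathcal N\{J\tau(t)+\xi(x)\};\mathcal N^2\tau(t))-e^{-2\pi iJ\xi(x)}\vartheta_1(\mathcal N\{J\tau(t)-\xi(x)\};\mathcal N^2\tau(t))$; for $C_N,C_N^\vee,BC_N$: same with $\vartheta_2$ in place of $\vartheta_1$; for $D_N$: same with $\vartheta_2$ and a plus sign between the two terms. The constants are $m_j^{R_N}(t_\ast)=2\pi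 r\,\vartheta_2(\mathcal N J\tau(t_\ast);\mathcal N^2\tau(t_\ast))$ for $A_N,C_N,C_N^\vee,BC_N$; for $B_N,B_N^\vee$ the same except $m_1=4\pi r\,\vartheta_2(0;\mathcal N^2\tau(t_\ast))$; for $D_N$ the same except $m_1=4\pi r\,\vartheta_2(0;\mathcal N^2\tau(t_\ast))$ and $m_N=4\pi r\,\vartheta_2(\mathcal N(N-1)\tau(t_\ast);\mathcal N^2\tau(t_\ast))$. The point process has density on the Weyl alcove proportional to $\det_{j,k}[\overline{M_j^{R_N}(x_k,t_\ast-t)}]\det_{j,k}[M_j^{R_N}(x_k,t)]$, and is determinantal with the kernel $K_t^{R_N}$ stated in the claim. *)

theory Defs
  imports "HOL-Analysis.Analysis"
begin

text \<open>Jacobi theta functions (for Im tau > 0); the series index n \<ge> 1 of the paper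
  is shifted to k = n - 1 \<ge> 0.\<close>

definition theta1 :: "complex \<Rightarrow> complex \<Rightarrow> complex" where
  "theta1 v tau = 2 * (\<Sum>k. (-1) ^ k * exp (tau * of_real pi * \<i> * (of_nat k + 1/2)\<^sup>2)
                              * sin ((2 * of_nat k + 1) * of_real pi * v))"

definition theta2 :: "complex \<Rightarrow> complex \<Rightarrow> complex" where
  "theta2 v tau = 2 * (\<Sum>k. exp (tau * of_real pi * \<i> * (of_nat k + 1/2)\<^sup>2)
                              * cos ((2 * of_nat k + 1) * of_real pi * v))"

definition xi :: "real \<Rightarrow> real \<Rightarrow> real" where
  "xi r x = x / (2 * pi * r)"

definition tau :: "real \<Rightarrow> real \<Rightarrow> complex" where
  "tau r t = \<i> * of_real (t / (2 * pi * r\<^sup>2))"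

datatype root_type = A | B | Bv | C | Cv | BC | D

definition Jfun :: "root_type \<Rightarrow> nat \<Rightarrow> real" where
  "Jfun R j = (case R of
      A \<Rightarrow> real j - 1/2 | Cv \<Rightarrow> real j - 1/2
    | B \<Rightarrow> real j - 1 | Bv \<Rightarrow> real j - 1 | D \<Rightarrow> real j - 1
    | C \<Rightarrow> real j | BC \<Rightarrow> real j)"

definition calN :: "root_type \<Rightarrow> nat \<Rightarrow> real" where
  "calN R N = (case R of
      A \<Rightarrow> real N | B \<Rightarrow> 2 * real N - 1 | Bv \<Rightarrow> 2 * real N | Cv \<Rightarrow> 2 * real N
    | C \<Rightarrow> 2 * (real N + 1) | BC \<Rightarrow> 2 * real N + 1 | D \<Rightarrow> 2 * (real N - 1))"

definition Mfun :: "root_type \<Rightarrow> nat \<Rightarrow> real \<Rightarrow> nat \<Rightarrow> real \<Rightarrow> real \<Rightarrow> complex" where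
  "Mfun R N r j x t =
    (let J = of_real (Jfun R j); NN = of_real (calN R N); z = of_real (xi r x); tt = tau r t;
         ep = exp (2 * of_real pi * \<i> * J * z); em = exp (- 2 * of_real pi * \<i> * J * z)
     in case R of
       A \<Rightarrow> ep * theta2 (NN * (J * tt + z)) (NN\<^sup>2 * tt)
     | B \<Rightarrow> ep * theta1 (NN * (J * tt + z)) (NN\<^sup>2 * tt) - em * theta1 (NN * (J * tt - z)) (NN\<^sup>2 * tt)
     | Bv \<Rightarrow> ep * theta1 (NN * (J * tt + z)) (NN\<^sup>2 * tt) - em * theta1 (NN * (J * tt - z)) (NN\<^sup>2 * tt)
     | C \<Rightarrow> ep * theta2 (NN * (J * tt + z)) (NN\<^sup>2 * tt) - em * theta2 (NN * (J * tt - z)) (NN\<^sup>2 * tt)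
     | Cv \<Rightarrow> ep * theta2 (NN * (J * tt + z)) (NN\<^sup>2 * tt) - em * theta2 (NN * (J * tt - z)) (NN\<^sup>2 * tt)
     | BC \<Rightarrow> ep * theta2 (NN * (J * tt + z)) (NN\<^sup>2 * tt) - em * theta2 (NN * (J * tt - z)) (NN\<^sup>2 * tt)
     | D \<Rightarrow> ep * theta2 (NN * (J * tt + z)) (NN\<^sup>2 * tt) + em * theta2 (NN * (J * tt - z)) (NN\<^sup>2 * tt))"

definition mfun :: "root_type \<Rightarrow> nat \<Rightarrow> real \<Rightarrow> nat \<Rightarrow> real \<Rightarrow> complex" where
  "mfun R N r j ts =
    (let J = of_real (Jfun R j); NN = of_real (calN R N); tt = tau r ts in
     if (R = B \<or> R = Bv \<or> R = D) \<and> j = 1 then 4 * of_real (pi * r) * theta2 0 (NN\<^sup>2 * tt)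
     else if R = D \<and> j = N then 4 * of_real (pi * r) * theta2 (NN * (of_nat N - 1) * tt) (NN\<^sup>2 * tt)
     else 2 * of_real (pi * r) * theta2 (NN * J * tt) (NN\<^sup>2 * tt))"

definition kernel_t :: "root_type \<Rightarrow> nat \<Rightarrow> real \<Rightarrow> real \<Rightarrow> real \<Rightarrow> real \<Rightarrow> real \<Rightarrow> complex" where
  "kernel_t R N r t ts x y =
     (\<Sum>n = 1..N. (1 / mfun R N r n ts) * Mfun R N r n x t * cnj (Mfun R N r n y (ts - t)))"

definition state_space :: "root_type \<Rightarrow> real \<Rightarrow> real set" where
  "state_space R r = (if R = A then {0..<2 * pi * r} else {0..pi * r})"

text \<open>sin(a u)/sin u, extended continuously (L'Hopital) at the zeros of sin u.\<close>
definition sinratio :: "real \<Rightarrow> real \<Rightarrow> real" where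
  "sinratio a u = (if sin u = 0 then a * cos (a * u) / cos u else sin (a * u) / sin u)"

definition K_A :: "nat \<Rightarrow> real \<Rightarrow> real \<Rightarrow> real \<Rightarrow> real" where
  "K_A N r x y = 1 / (2 * pi * r) * sinratio (real N) ((x - y) / (2 * r))"

definition K_B :: "nat \<Rightarrow> real \<Rightarrow> real \<Rightarrow> real \<Rightarrow> real" where
  "K_B N r x y = 1 / (2 * pi * r) *
     (sinratio (2 * real N) ((x - y) / (2 * r)) - sinratio (2 * real N) ((x + y) / (2 * r)))"

definition K_C :: "nat \<Rightarrow> real \<Rightarrow> real \<Rightarrow> real \<Rightarrow> real" where
  "K_C N r x y = 1 / (2 * pi * r) *
     (sinratio (2 * real N + 1) ((x - y) / (2 * r)) - sinratio (2 * real N + 1) ((x + y) / (2 * r)))"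

definition K_D :: "nat \<Rightarrow> real \<Rightarrow> real \<Rightarrow> real \<Rightarrow> real" where
  "K_D N r x y = 1 / (2 * pi * r) *
     (sinratio (2 * real N - 1) ((x - y) / (2 * r)) + sinratio (2 * real N - 1) ((x + y) / (2 * r)))"

definition limit_kernel :: "root_type \<Rightarrow> nat \<Rightarrow> real \<Rightarrow> real \<Rightarrow> real \<Rightarrow> real" where
  "limit_kernel R = (case R of
      A \<Rightarrow> K_A | B \<Rightarrow> K_B | BC \<Rightarrow> K_B | Cv \<Rightarrow> K_B
    | C \<Rightarrow> K_C | Bv \<Rightarrow> K_C | D \<Rightarrow> K_D)"

end

theory Submission
  imports Defs
begin

text \<open>
  With s = t / (2 pi r^2), every M_j and m_j is built from the twisted theta functions
  e^(2 pi i J w) theta(L (J i s + w); L^2 i s), whose series are sums of Gaussian modes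
  e^(-pi s b^2) e^(2 pi i b w) over the shifted half-lattice b \<in> J + L (\<int> + 1/2).
  For 0 \<le> J < L the least |b| is attained at a = J - L/2, and also at -a when J = 0, so after
  multiplication by e^(pi s (a^2 - J^2)) Tannery's theorem leaves only these modes as s \<rightarrow> \<infinity>.
  At t = t_*/2 the normalising factors of the two M_j multiply to that of m_j(t_*), hence every
  summand of the kernel tends to a product of two trigonometric modes, and the resulting sums
  are Dirichlet kernels, evaluated by telescoping.
\<close>

lemma sinratio_minus: "sinratio (- a) u = - sinratio a u"
  by (simp add: sinratio_def)

lemma sinratio_0: "sinratio 0 u = 0"
  by (simp add: sinratio_def)

lemma sinratio_1: "sinratio 1 u = 1"
  by (cases "sin u = 0") (use sin_cos_squared_add[of u] in \<open>auto simp: sinratio_def\<close>)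

lemma cos_add_even_multiple:
  assumes "sin w = 0"
  shows "cos (z + 2 * real l * w) = cos z"
proof (induction l)
  case (Suc l)
  have "cos (z + 2 * real (Suc l) * w) = cos ((z + 2 * real l * w) + 2 * w)"
    by (simp add: algebra_simps)
  also have "\<dots> = cos (z + 2 * real l * w)"
    unfolding cos_add using assms by (simp add: cos_double_sin sin_double)
  finally show ?case
    using Suc by simp
qed simp

lemma sum_cos_arith_progression:
  "(\<Sum>l<N. cos ((2 * real l + c) * w)) = (sinratio (2 * real N + c - 1) w - sinratio (c - 1) w) / 2"
proof (cases "sin w = 0")
  case True
  \<comment> \<open>here sinratio is its continuous extension, and both sides reduce to N cos(c w)\<close>
  have cos_sq: "cos w * cos w = 1"
    using True sin_cos_squared_add[of w] by (simp add: power2_eq_square)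
  then have "cos w \<noteq> 0"
    by auto
  have shift: "cos ((2 * real l + c') * w) = cos (c' * w)" for l c'
    using cos_add_even_multiple[OF True, of "c' * w" l] by (simp add: algebra_simps)
  have "cos (c * w) = cos ((c - 1) * w) * cos w"
    using cos_add[of "(c - 1) * w" w] True by (simp add: algebra_simps)
  also have "\<dots> = cos ((c - 1) * w) / cos w"
    using cos_sq \<open>cos w \<noteq> 0\<close> by (simp add: field_simps)
  finally have "cos (c * w) = cos ((c - 1) * w) / cos w" .
  moreover have "cos ((2 * real N + c - 1) * w) = cos ((c - 1) * w)"
    using shift[of N "c - 1"] by (simp add: algebra_simps)
  moreover have "(\<Sum>l<N. cos ((2 * real l + c) * w)) = real N * cos (c * w)"
    by (simp add: shift)
  ultimately show ?thesis
    using True \<open>cos w \<noteq> 0\<close> by (simp add: sinratio_def field_simps)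
next
  case False
  define f where "f l = sin ((2 * real l + c - 1) * w)" for l
  have "2 * sin w * cos ((2 * real l + c) * w) = f (Suc l) - f l" for l
    using sin_add[of "(2 * real l + c) * w" w] sin_diff[of "(2 * real l + c) * w" w]
    by (simp add: f_def algebra_simps)
  then have "2 * sin w * (\<Sum>l<N. cos ((2 * real l + c) * w)) = (\<Sum>l<N. f (Suc l) - f l)"
    by (simp only: sum_distrib_left)
  also have "\<dots> = f N - f 0"
    by (rule sum_lessThan_telescope)
  finally show ?thesis
    using False by (simp add: f_def sinratio_def field_simps)
qed

lemma sum_sin_mult_sin:
  fixes N :: nat and c r x y :: real
  assumes "r \<noteq> 0"
  defines "S u \<equiv> sinratio (2 * real N + 2 * c + 1) u - sinratio (2 * c + 1) u"
  shows "(\<Sum>n=1..N. 4 * sin ((real n + c) * x / r) * sin ((real n + c) * y / r) / (2 * pi * r))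
       = (S ((x - y) / (2 * r)) - S ((x + y) / (2 * r))) / (2 * pi * r)"
proof -
  define C where "C u = (\<Sum>l<N. cos ((2 * real l + (2 * c + 2)) * u))" for u
  have summand: "4 * sin ((real (Suc l) + c) * x / r) * sin ((real (Suc l) + c) * y / r)
      = 2 * cos ((2 * real l + (2 * c + 2)) * ((x - y) / (2 * r)))
      - 2 * cos ((2 * real l + (2 * c + 2)) * ((x + y) / (2 * r)))" for l
  proof -
    have "(real (Suc l) + c) * x / r - (real (Suc l) + c) * y / r
        = (2 * real l + (2 * c + 2)) * ((x - y) / (2 * r))"
      "(real (Suc l) + c) * x / r + (real (Suc l) + c) * y / r
        = (2 * real l + (2 * c + 2)) * ((x + y) / (2 * r))"
      using assms(1) by (simp_all add: field_simps)
    moreover have "4 * sin A * sin B = 2 * cos (A - B) - 2 * cos (A + B)" for A B :: real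
      unfolding mult.assoc sin_times_sin by simp
    ultimately show ?thesis
      by (simp only:)
  qed
  have "(\<Sum>n=1..N. 4 * sin ((real n + c) * x / r) * sin ((real n + c) * y / r))
      = 2 * C ((x - y) / (2 * r)) - 2 * C ((x + y) / (2 * r))"
    unfolding One_nat_def sum.atLeast1_atMost_eq summand C_def
    by (simp add: sum_subtractf sum_distrib_left)
  also have "\<dots> = S ((x - y) / (2 * r)) - S ((x + y) / (2 * r))"
    unfolding C_def S_def sum_cos_arith_progression by (simp add: field_simps)
  finally show ?thesis
    by (simp only: sum_divide_distrib[symmetric])
qed

lemma sum_cos_mult_cos:
  fixes N :: nat and c r x y :: real
  assumes "r \<noteq> 0"
  defines "S u \<equiv> sinratio (2 * real N + 2 * c + 1) u - sinratio (2 * c + 1) u"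
  shows "(\<Sum>n=1..N. 4 * cos ((real n + c) * x / r) * cos ((real n + c) * y / r) / (2 * pi * r))
       = (S ((x - y) / (2 * r)) + S ((x + y) / (2 * r))) / (2 * pi * r)"
proof -
  define C where "C u = (\<Sum>l<N. cos ((2 * real l + (2 * c + 2)) * u))" for u
  have summand: "4 * cos ((real (Suc l) + c) * x / r) * cos ((real (Suc l) + c) * y / r)
      = 2 * cos ((2 * real l + (2 * c + 2)) * ((x - y) / (2 * r)))
      + 2 * cos ((2 * real l + (2 * c + 2)) * ((x + y) / (2 * r)))" for l
  proof -
    have "(real (Suc l) + c) * x / r - (real (Suc l) + c) * y / r
        = (2 * real l + (2 * c + 2)) * ((x - y) / (2 * r))"
      "(real (Suc l) + c) * x / r + (real (Suc l) + c) * y / r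
        = (2 * real l + (2 * c + 2)) * ((x + y) / (2 * r))"
      using assms(1) by (simp_all add: field_simps)
    moreover have "4 * cos A * cos B = 2 * cos (A - B) + 2 * cos (A + B)" for A B :: real
      unfolding mult.assoc cos_times_cos by simp
    ultimately show ?thesis
      by (simp only:)
  qed
  have "(\<Sum>n=1..N. 4 * cos ((real n + c) * x / r) * cos ((real n + c) * y / r))
      = 2 * C ((x - y) / (2 * r)) + 2 * C ((x + y) / (2 * r))"
    unfolding One_nat_def sum.atLeast1_atMost_eq summand C_def
    by (simp add: sum.distrib sum_distrib_left)
  also have "\<dots> = S ((x - y) / (2 * r)) + S ((x + y) / (2 * r))"
    unfolding C_def S_def sum_cos_arith_progression by (simp add: field_simps)
  finally show ?thesis
    by (simp only: sum_divide_distrib[symmetric])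
qed

lemma K_B_eq_sum:
  assumes "r \<noteq> 0"
  shows "K_B N r x y = (\<Sum>n=1..N. 4 * sin ((real n - real N - 1/2) * x / r)
                          * sin ((real n - real N - 1/2) * y / r) / (2 * pi * r))"
proof -
  have S: "sinratio (2 * real N + 2 * (- real N - 1/2) + 1) u - sinratio (2 * (- real N - 1/2) + 1) u
      = sinratio (2 * real N) u" for u
  proof -
    have "2 * real N + 2 * (- real N - 1/2) + 1 = 0" "2 * (- real N - 1/2) + 1 = - (2 * real N)"
      by simp_all
    then show ?thesis
      by (simp only: sinratio_0 sinratio_minus)
  qed
  have "K_B N r x y = (\<Sum>n=1..N. 4 * sin ((real n + (- real N - 1/2)) * x / r)
                          * sin ((real n + (- real N - 1/2)) * y / r) / (2 * pi * r))"
    unfolding sum_sin_mult_sin[OF assms] S by (simp add: K_B_def)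
  then show ?thesis
    by (simp add: algebra_simps)
qed

lemma K_C_eq_sum:
  assumes "r \<noteq> 0"
  shows "K_C N r x y = (\<Sum>n=1..N. 4 * sin ((real n - real N - 1) * x / r)
                          * sin ((real n - real N - 1) * y / r) / (2 * pi * r))"
proof -
  have S: "sinratio (2 * real N + 2 * (- real N - 1) + 1) u - sinratio (2 * (- real N - 1) + 1) u
      = sinratio (2 * real N + 1) u - 1" for u
  proof -
    have "2 * real N + 2 * (- real N - 1) + 1 = - 1" "2 * (- real N - 1) + 1 = - (2 * real N + 1)"
      by simp_all
    then show ?thesis
      by (simp only: sinratio_1 sinratio_minus)
  qed
  have "K_C N r x y = (\<Sum>n=1..N. 4 * sin ((real n + (- real N - 1)) * x / r)
                          * sin ((real n + (- real N - 1)) * y / r) / (2 * pi * r))"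
    unfolding sum_sin_mult_sin[OF assms] S by (simp add: K_C_def)
  then show ?thesis
    by (simp add: algebra_simps)
qed

lemma K_D_eq_sum:
  assumes "r \<noteq> 0"
  shows "K_D N r x y + 1 / (pi * r) = (\<Sum>n=1..N. 4 * cos ((real n - real N) * x / r)
                          * cos ((real n - real N) * y / r) / (2 * pi * r))"
proof -
  have S: "sinratio (2 * real N + 2 * (- real N) + 1) u - sinratio (2 * (- real N) + 1) u
      = sinratio (2 * real N - 1) u + 1" for u
  proof -
    have "2 * real N + 2 * (- real N) + 1 = 1" "2 * (- real N) + 1 = - (2 * real N - 1)"
      by simp_all
    then show ?thesis
      by (simp only: sinratio_1 sinratio_minus)
  qed
  have "K_D N r x y + 1 / (pi * r) = (\<Sum>n=1..N. 4 * cos ((real n + (- real N)) * x / r)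
                          * cos ((real n + (- real N)) * y / r) / (2 * pi * r))"
    unfolding sum_cos_mult_cos[OF assms] S using assms by (simp add: K_D_def field_simps)
  then show ?thesis
    by simp
qed

lemma sum_sin_symmetric_progression: "(\<Sum>l<N. sin ((2 * real l + 1 - real N) * u)) = 0"
proof -
  have "(\<Sum>l<N. sin ((2 * real l + 1 - real N) * u))
      = (\<Sum>l<N. sin ((2 * real (N - Suc l) + 1 - real N) * u))"
    by (rule sum.nat_diff_reindex[symmetric])
  also have "\<dots> = - (\<Sum>l<N. sin ((2 * real l + 1 - real N) * u))"
    unfolding sum_negf[symmetric]
    by (rule sum.cong) (simp_all add: algebra_simps flip: sin_minus)
  finally show ?thesis
    by simp
qed

lemma sum_cis_symmetric_progression:
  "(\<Sum>n=1..N. cis ((2 * real n - 1 - real N) * u)) = complex_of_real (sinratio (real N) u)"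
proof -
  have "(\<Sum>n=1..N. cis ((2 * real n - 1 - real N) * u)) = (\<Sum>l<N. cis ((2 * real l + (1 - real N)) * u))"
    unfolding One_nat_def sum.atLeast1_atMost_eq by (simp add: algebra_simps)
  moreover have "(\<Sum>l<N. cos ((2 * real l + (1 - real N)) * u)) = sinratio (real N) u"
    using sinratio_minus[of "real N" u] by (simp add: sum_cos_arith_progression)
  ultimately show ?thesis
    using sum_sin_symmetric_progression[of N u]
    by (simp add: complex_eq_iff algebra_simps)
qed

definition gauss_mode :: "real \<Rightarrow> real \<Rightarrow> real \<Rightarrow> real \<Rightarrow> complex" where
  "gauss_mode a b w s = of_real (exp (- pi * s * (b\<^sup>2 - a\<^sup>2))) * cis (2 * pi * b * w)"

lemma norm_gauss_mode: "norm (gauss_mode a b w s) = exp (- pi * s * (b\<^sup>2 - a\<^sup>2))"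
  by (simp add: gauss_mode_def norm_mult)

lemma gauss_mode_tendsto:
  assumes "a\<^sup>2 \<le> b\<^sup>2"
  shows "(gauss_mode a b w \<longlongrightarrow> (if b\<^sup>2 = a\<^sup>2 then cis (2 * pi * b * w) else 0)) at_top"
proof (cases "b\<^sup>2 = a\<^sup>2")
  case True
  have "gauss_mode a b w = (\<lambda>_. cis (2 * pi * b * w))"
    unfolding gauss_mode_def True by simp
  then show ?thesis
    unfolding if_P[OF True] by simp
next
  case False
  then have "0 < pi * (b\<^sup>2 - a\<^sup>2)"
    using assms by simp
  then have "filterlim (\<lambda>s. - (pi * (b\<^sup>2 - a\<^sup>2)) * s) at_bot at_top"
    by (intro filterlim_tendsto_neg_mult_at_bot[OF tendsto_const _ filterlim_ident]) simp
  then have "((\<lambda>s. exp (- pi * s * (b\<^sup>2 - a\<^sup>2))) \<longlongrightarrow> 0) at_top"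
    by (intro filterlim_compose[OF exp_at_bot]) (simp add: mult_ac)
  then have "((\<lambda>s. norm (gauss_mode a b w s)) \<longlongrightarrow> 0) at_top"
    by (simp add: norm_gauss_mode)
  then show ?thesis
    using False by (simp add: tendsto_norm_zero_iff)
qed

lemma norm_gauss_mode_le:
  assumes "a\<^sup>2 \<le> b\<^sup>2" and "1 \<le> s" and "real k - d \<le> \<bar>b\<bar>"
  shows "norm (gauss_mode a b w s) \<le> exp (d + 1 + a\<^sup>2) * exp (-1) ^ k"
proof -
  have "\<bar>b\<bar> - 1 \<le> b\<^sup>2"
    using zero_le_power2[of "\<bar>b\<bar> - 1/2"] by (simp add: power2_eq_square algebra_simps)
  moreover have "b\<^sup>2 - a\<^sup>2 \<le> pi * s * (b\<^sup>2 - a\<^sup>2)"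
  proof -
    have "1 \<le> pi * s"
      using mult_mono[of 1 pi 1 s] pi_gt3 assms(2) by simp
    then show ?thesis
      using assms(1) mult_right_mono[of 1 "pi * s" "b\<^sup>2 - a\<^sup>2"] by simp
  qed
  ultimately have "- pi * s * (b\<^sup>2 - a\<^sup>2) \<le> (d + 1 + a\<^sup>2) + - real k"
    using assms(3) by linarith
  then have "norm (gauss_mode a b w s) \<le> exp (d + 1 + a\<^sup>2) * exp (- real k)"
    by (simp add: norm_gauss_mode flip: exp_add)
  also have "exp (- real k) = exp (-1) ^ k"
    by (simp flip: exp_of_nat_mult)
  finally show ?thesis .
qed

lemma gauss_series_tendsto:
  fixes b :: "nat \<Rightarrow> real" and c :: "nat \<Rightarrow> complex"
  assumes c: "\<And>k. norm (c k) \<le> 1"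
    and b0: "a\<^sup>2 \<le> (b 0)\<^sup>2" and b_gt: "\<And>k. a\<^sup>2 < (b (Suc k))\<^sup>2"
    and b_growth: "\<And>k. real k - d \<le> \<bar>b k\<bar>"
  shows "((\<lambda>s. \<Sum>k. c k * gauss_mode a (b k) w s)
            \<longlongrightarrow> c 0 * (if (b 0)\<^sup>2 = a\<^sup>2 then cis (2 * pi * b 0 * w) else 0)) at_top"
    and "\<forall>\<^sub>F s in at_top. summable (\<lambda>k. c k * gauss_mode a (b k) w s)"
proof -
  define l where "l k = c k * (if (b k)\<^sup>2 = a\<^sup>2 then cis (2 * pi * b k * w) else 0)" for k
  define M where "M k = exp (d + 1 + a\<^sup>2) * exp (-1) ^ k" for k
  have b_ge: "a\<^sup>2 \<le> (b k)\<^sup>2" for k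
    using b0 b_gt by (cases k) (auto intro: less_imp_le)
  have lim: "((\<lambda>s. c k * gauss_mode a (b k) w s) \<longlongrightarrow> l k) at_top" for k
    unfolding l_def by (intro tendsto_mult tendsto_const gauss_mode_tendsto b_ge)
  have "norm (c k * gauss_mode a (b k) w s) \<le> M k" if "1 \<le> s" for k s
    using mult_mono[OF c norm_gauss_mode_le[OF b_ge that b_growth]] by (simp add: M_def norm_mult)
  then have bound: "\<forall>\<^sub>F (k, s) in at_top \<times>\<^sub>F at_top. norm (c k * gauss_mode a (b k) w s) \<le> M k"
    unfolding eventually_prod_filter
    by (intro exI[of _ "\<lambda>_. True"] exI[of _ "\<lambda>s. 1 \<le> s"]) auto
  have "summable M"
    unfolding M_def by (intro summable_mult summable_geometric) simp
  from tannerys_theorem[OF lim bound this] have tannery: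
    "\<forall>\<^sub>F s in at_top. summable (\<lambda>k. norm (c k * gauss_mode a (b k) w s))"
    "((\<lambda>s. \<Sum>k. c k * gauss_mode a (b k) w s) \<longlongrightarrow> suminf l) at_top"
    by simp_all
  have "l k = 0" if "k \<notin> {0}" for k
    using b_gt[of "k - 1"] that by (simp add: l_def)
  then have "suminf l = l 0"
    using suminf_finite[of "{0}" l] by simp
  then show "((\<lambda>s. \<Sum>k. c k * gauss_mode a (b k) w s)
            \<longlongrightarrow> c 0 * (if (b 0)\<^sup>2 = a\<^sup>2 then cis (2 * pi * b 0 * w) else 0)) at_top"
    using tannery(2) by (simp only: l_def)
  show "\<forall>\<^sub>F s in at_top. summable (\<lambda>k. c k * gauss_mode a (b k) w s)"
    using tannery(1) by (auto elim!: eventually_mono intro: summable_norm_cancel)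
qed

lemma half_lattice_gauss_series_tendsto:
  fixes L J w :: real and c c' :: "nat \<Rightarrow> complex"
  assumes L: "1 \<le> L" and J: "0 \<le> J" "J < L"
    and c: "\<And>k. norm (c k) \<le> 1" and c': "\<And>k. norm (c' k) \<le> 1"
  defines "a \<equiv> J - L / 2"
  shows "((\<lambda>s. \<Sum>k. c k * gauss_mode a (J + L * (real k + 1/2)) w s
                    + c' k * gauss_mode a (J - L * (real k + 1/2)) w s)
            \<longlongrightarrow> c 0 * (if J = 0 then cis (- 2 * pi * a * w) else 0) + c' 0 * cis (2 * pi * a * w)) at_top"
    and "\<forall>\<^sub>F s in at_top. summable (\<lambda>k. c k * gauss_mode a (J + L * (real k + 1/2)) w s
                                    + c' k * gauss_mode a (J - L * (real k + 1/2)) w s)"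
proof -
  define b where "b \<sigma> k = J + \<sigma> * (L * (real k + 1/2))" for \<sigma> :: real and k :: nat
  have far: "L * (real k + 1/2) - J \<le> \<bar>b \<sigma> k\<bar>" if "\<bar>\<sigma>\<bar> = 1" for \<sigma> k
  proof -
    have "\<sigma> = 1 \<or> \<sigma> = -1"
      using that by (auto simp: abs_if split: if_splits)
    moreover have "0 \<le> L * (real k + 1/2)"
      using L by simp
    ultimately show ?thesis
      using J by (auto simp: b_def)
  qed
  have b_gt: "\<And>k. a\<^sup>2 < (b \<sigma> (Suc k))\<^sup>2" if "\<bar>\<sigma>\<bar> = 1" for \<sigma>
  proof -
    fix k :: nat
    have "L * (3/2) \<le> L * (real (Suc k) + 1/2)"
      using L by (intro mult_left_mono) auto
    moreover have "\<bar>a\<bar> < L * (3/2) - J"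
      using J L by (auto simp: a_def abs_if)
    ultimately have "\<bar>a\<bar> < \<bar>b \<sigma> (Suc k)\<bar>"
      using far[OF that, of "Suc k"] by linarith
    then show "a\<^sup>2 < (b \<sigma> (Suc k))\<^sup>2"
      by (meson abs_le_square_iff not_le)
  qed
  have b_growth: "\<And>k. real k - J \<le> \<bar>b \<sigma> k\<bar>" if "\<bar>\<sigma>\<bar> = 1" for \<sigma>
  proof -
    fix k :: nat
    have "real k + 1/2 \<le> L * (real k + 1/2)"
      using mult_right_mono[OF L, of "real k + 1/2"] by simp
    then show "real k - J \<le> \<bar>b \<sigma> k\<bar>"
      using far[OF that, of k] by linarith
  qed
  have b0: "b 1 0 = J + L / 2" "b (-1) 0 = a"
    by (simp_all add: b_def a_def)
  have plus_0: "a\<^sup>2 \<le> (b 1 0)\<^sup>2" "(b 1 0)\<^sup>2 = a\<^sup>2 \<longleftrightarrow> J = 0"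
    using J L unfolding b0 a_def by (auto simp: power2_eq_square algebra_simps)
  note plus = gauss_series_tendsto[where b = "b 1" and c = c and w = w,
      OF c plus_0(1) b_gt[OF abs_one] b_growth[OF abs_one]]
  note minus = gauss_series_tendsto[where b = "b (-1)" and c = c' and w = w,
      OF c' _ b_gt[OF abs_neg_one] b_growth[OF abs_neg_one], unfolded b0, OF order_refl]
  have sum_eq: "\<forall>\<^sub>F s in at_top.
      (\<Sum>k. c k * gauss_mode a (b 1 k) w s) + (\<Sum>k. c' k * gauss_mode a (b (-1) k) w s)
    = (\<Sum>k. c k * gauss_mode a (J + L * (real k + 1/2)) w s
            + c' k * gauss_mode a (J - L * (real k + 1/2)) w s)"
    using plus(2) minus(2) by eventually_elim (simp add: suminf_add b_def)
  have "(if (b 1 0)\<^sup>2 = a\<^sup>2 then cis (2 * pi * b 1 0 * w) else 0)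
      = (if J = 0 then cis (- 2 * pi * a * w) else 0)"
    using plus_0(2) by (auto simp: b0 a_def)
  then have "((\<lambda>s. (\<Sum>k. c k * gauss_mode a (b 1 k) w s) + (\<Sum>k. c' k * gauss_mode a (b (-1) k) w s))
      \<longlongrightarrow> c 0 * (if J = 0 then cis (- 2 * pi * a * w) else 0) + c' 0 * cis (2 * pi * a * w)) at_top"
    using tendsto_add[OF plus(1) minus(1)] by simp
  then show "((\<lambda>s. \<Sum>k. c k * gauss_mode a (J + L * (real k + 1/2)) w s
                    + c' k * gauss_mode a (J - L * (real k + 1/2)) w s)
            \<longlongrightarrow> c 0 * (if J = 0 then cis (- 2 * pi * a * w) else 0) + c' 0 * cis (2 * pi * a * w)) at_top"
    by (simp add: tendsto_cong[OF sum_eq])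
  show "\<forall>\<^sub>F s in at_top. summable (\<lambda>k. c k * gauss_mode a (J + L * (real k + 1/2)) w s
                                    + c' k * gauss_mode a (J - L * (real k + 1/2)) w s)"
    using plus(2) minus(2) by eventually_elim (simp add: summable_add b_def)
qed

definition twisted_theta1 :: "real \<Rightarrow> real \<Rightarrow> real \<Rightarrow> real \<Rightarrow> complex" where
  "twisted_theta1 L J w s = cis (2 * pi * J * w)
     * theta1 (of_real L * (of_real J * (\<i> * of_real s) + of_real w)) ((of_real L)\<^sup>2 * (\<i> * of_real s))"

definition twisted_theta2 :: "real \<Rightarrow> real \<Rightarrow> real \<Rightarrow> real \<Rightarrow> complex" where
  "twisted_theta2 L J w s = cis (2 * pi * J * w)
     * theta2 (of_real L * (of_real J * (\<i> * of_real s) + of_real w)) ((of_real L)\<^sup>2 * (\<i> * of_real s))"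

lemma gauss_mode_eq_exp:
  "gauss_mode a b w s = exp (of_real (- pi * s * (b\<^sup>2 - a\<^sup>2)) + \<i> * of_real (2 * pi * b * w))"
  by (simp only: gauss_mode_def cis_conv_exp exp_add exp_of_real)

lemma theta_summand_exp_eq_gauss_mode:
  fixes L J a w s :: real and k :: nat
  defines "P \<equiv> of_real (pi * s * (a\<^sup>2 - J\<^sup>2)) + \<i> * of_real (2 * pi * J * w)
      + (of_real L)\<^sup>2 * (\<i> * of_real s) * of_real pi * \<i> * (of_nat k + 1/2)\<^sup>2"
    and "V \<equiv> (2 * of_nat k + 1) * of_real pi * (of_real L * (of_real J * (\<i> * of_real s) + of_real w))"
  shows "exp (P + \<i> * V) = gauss_mode a (J + L * (real k + 1/2)) w s"
    and "exp (P - \<i> * V) = gauss_mode a (J - L * (real k + 1/2)) w s"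
  unfolding gauss_mode_eq_exp P_def V_def
  by (rule arg_cong[where f = exp]; simp add: algebra_simps power2_eq_square)+

lemma theta2_summand_eq:
  fixes L J a w s :: real and k :: nat
  shows "of_real (exp (pi * s * (a\<^sup>2 - J\<^sup>2))) * cis (2 * pi * J * w) * 2
      * (exp ((of_real L)\<^sup>2 * (\<i> * of_real s) * of_real pi * \<i> * (of_nat k + 1/2)\<^sup>2)
         * cos ((2 * of_nat k + 1) * of_real pi * (of_real L * (of_real J * (\<i> * of_real s) + of_real w))))
    = gauss_mode a (J + L * (real k + 1/2)) w s + gauss_mode a (J - L * (real k + 1/2)) w s"
  unfolding theta_summand_exp_eq_gauss_mode[symmetric] cos_exp_eq cis_conv_exp
  by (simp add: exp_of_real[symmetric] exp_add[symmetric] field_simps)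

lemma theta1_summand_eq:
  fixes L J a w s :: real and k :: nat
  shows "of_real (exp (pi * s * (a\<^sup>2 - J\<^sup>2))) * cis (2 * pi * J * w) * 2
      * ((-1) ^ k * exp ((of_real L)\<^sup>2 * (\<i> * of_real s) * of_real pi * \<i> * (of_nat k + 1/2)\<^sup>2)
         * sin ((2 * of_nat k + 1) * of_real pi * (of_real L * (of_real J * (\<i> * of_real s) + of_real w))))
    = (-1) ^ k * - \<i> * gauss_mode a (J + L * (real k + 1/2)) w s
      + (-1) ^ k * \<i> * gauss_mode a (J - L * (real k + 1/2)) w s"
  unfolding theta_summand_exp_eq_gauss_mode[symmetric] sin_exp_eq cis_conv_exp
  by (simp add: exp_of_real[symmetric] exp_add[symmetric] field_simps)

lemma mult_suminf_eq:
  fixes c :: "'a::real_normed_field" and g f :: "nat \<Rightarrow> 'a"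
  assumes "c \<noteq> 0" and "\<And>k. c * g k = f k" and "summable f"
  shows "c * suminf g = suminf f"
proof -
  have "summable (\<lambda>k. c * g k)"
    using assms(3) by (simp add: assms(2))
  with assms(1) have "summable g"
    by simp
  then show ?thesis
    by (simp add: suminf_mult[symmetric] assms(2))
qed

lemma twisted_theta2_tendsto:
  assumes "1 \<le> L" "0 \<le> J" "J < L"
  defines "a \<equiv> J - L / 2"
  shows "((\<lambda>s. of_real (exp (pi * s * (a\<^sup>2 - J\<^sup>2))) * twisted_theta2 L J w s)
           \<longlongrightarrow> (if J = 0 then cis (- 2 * pi * a * w) else 0) + cis (2 * pi * a * w)) at_top"
proof -
  note series = half_lattice_gauss_series_tendsto[OF assms(1-3), where c = "\<lambda>_. 1" and c' = "\<lambda>_. 1"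
      and w = w, folded a_def, simplified]
  have "\<forall>\<^sub>F s in at_top. of_real (exp (pi * s * (a\<^sup>2 - J\<^sup>2))) * twisted_theta2 L J w s
      = (\<Sum>k. gauss_mode a (J + L * (real k + 1/2)) w s + gauss_mode a (J - L * (real k + 1/2)) w s)"
    using series(2)
  proof eventually_elim
    case (elim s)
    show ?case
      using mult_suminf_eq[OF _ theta2_summand_eq elim]
      by (simp add: twisted_theta2_def theta2_def mult_ac)
  qed
  with series(1) show ?thesis
    by (simp add: tendsto_cong)
qed

lemma twisted_theta1_tendsto:
  assumes "1 \<le> L" "0 \<le> J" "J < L"
  defines "a \<equiv> J - L / 2"
  shows "((\<lambda>s. of_real (exp (pi * s * (a\<^sup>2 - J\<^sup>2))) * twisted_theta1 L J w s)
           \<longlongrightarrow> - \<i> * (if J = 0 then cis (- 2 * pi * a * w) else 0) + \<i> * cis (2 * pi * a * w)) at_top"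
proof -
  have "norm ((-1) ^ k * - \<i>) \<le> 1" "norm ((-1) ^ k * \<i>) \<le> 1" for k :: nat
    by (simp_all add: norm_mult norm_power)
  note series = half_lattice_gauss_series_tendsto[where c = "\<lambda>k. (-1) ^ k * - \<i>"
      and c' = "\<lambda>k. (-1) ^ k * \<i>" and w = w, OF assms(1-3) this, folded a_def]
  have "\<forall>\<^sub>F s in at_top. of_real (exp (pi * s * (a\<^sup>2 - J\<^sup>2))) * twisted_theta1 L J w s
      = (\<Sum>k. (-1) ^ k * - \<i> * gauss_mode a (J + L * (real k + 1/2)) w s
              + (-1) ^ k * \<i> * gauss_mode a (J - L * (real k + 1/2)) w s)"
    using series(2)
  proof eventually_elim
    case (elim s)
    show ?case
      using mult_suminf_eq[OF _ theta1_summand_eq elim]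
      by (simp add: twisted_theta1_def theta1_def mult_ac)
  qed
  with series(1) show ?thesis
    by (simp add: tendsto_cong)
qed

lemma twisted_theta2_odd_tendsto:
  assumes "1 \<le> L" "0 < J" "J < L"
  defines "a \<equiv> J - L / 2"
  shows "((\<lambda>s. of_real (exp (pi * s * (a\<^sup>2 - J\<^sup>2))) * (twisted_theta2 L J w s - twisted_theta2 L J (- w) s))
           \<longlongrightarrow> 2 * \<i> * of_real (sin (2 * pi * a * w))) at_top"
proof -
  have "0 \<le> J" "J \<noteq> 0"
    using assms(2) by simp_all
  note lim = twisted_theta2_tendsto[OF assms(1) this(1) assms(3), folded a_def]
  have "(cis (2 * pi * a * w)) - (cis (2 * pi * a * - w)) = 2 * \<i> * of_real (sin (2 * pi * a * w))"
    by (simp add: complex_eq_iff)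
  with tendsto_diff[OF lim[of w] lim[of "- w"]] \<open>J \<noteq> 0\<close> show ?thesis
    by (simp add: right_diff_distrib)
qed

lemma twisted_theta1_odd_tendsto:
  assumes "1 \<le> L" "0 \<le> J" "J < L"
  defines "a \<equiv> J - L / 2"
  shows "((\<lambda>s. of_real (exp (pi * s * (a\<^sup>2 - J\<^sup>2))) * (twisted_theta1 L J w s - twisted_theta1 L J (- w) s))
           \<longlongrightarrow> - 2 * (1 + (if J = 0 then 1 else 0)) * of_real (sin (2 * pi * a * w))) at_top"
proof -
  note lim = twisted_theta1_tendsto[OF assms(1-3), folded a_def]
  have "(- \<i> * (if J = 0 then cis (- 2 * pi * a * w) else 0) + \<i> * cis (2 * pi * a * w))
      - (- \<i> * (if J = 0 then cis (- 2 * pi * a * - w) else 0) + \<i> * cis (2 * pi * a * - w))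
      = - 2 * (1 + (if J = 0 then 1 else 0)) * of_real (sin (2 * pi * a * w))"
    by (simp add: complex_eq_iff)
  with tendsto_diff[OF lim[of w] lim[of "- w"]] show ?thesis
    by (simp add: right_diff_distrib)
qed

lemma twisted_theta2_even_tendsto:
  assumes "1 \<le> L" "0 \<le> J" "J < L"
  defines "a \<equiv> J - L / 2"
  shows "((\<lambda>s. of_real (exp (pi * s * (a\<^sup>2 - J\<^sup>2))) * (twisted_theta2 L J w s + twisted_theta2 L J (- w) s))
           \<longlongrightarrow> 2 * (1 + (if J = 0 then 1 else 0)) * of_real (cos (2 * pi * a * w))) at_top"
proof -
  note lim = twisted_theta2_tendsto[OF assms(1-3), folded a_def]
  have "((if J = 0 then cis (- 2 * pi * a * w) else 0) + cis (2 * pi * a * w))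
      + ((if J = 0 then cis (- 2 * pi * a * - w) else 0) + cis (2 * pi * a * - w))
      = 2 * (1 + (if J = 0 then 1 else 0)) * of_real (cos (2 * pi * a * w))"
    by (simp add: complex_eq_iff)
  with tendsto_add[OF lim[of w] lim[of "- w"]] show ?thesis
    by (simp add: distrib_left)
qed

lemma filterlim_divide_const_at_top:
  fixes c :: real
  assumes "0 < c"
  shows "filterlim (\<lambda>x. x / c) at_top at_top"
  using filterlim_tendsto_pos_mult_at_top[OF tendsto_const[of "1 / c"] _ filterlim_ident] assms
  by simp

lemma half_time_ratio_tendsto:
  fixes X Y Z :: "real \<Rightarrow> complex" and E c :: real
  assumes X: "((\<lambda>s. of_real (exp (pi * s * E)) * X s) \<longlongrightarrow> LX) at_top"
    and Y: "((\<lambda>s. of_real (exp (pi * s * E)) * Y s) \<longlongrightarrow> LY) at_top"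
    and Z: "((\<lambda>s. of_real (exp (pi * s * E)) * Z s) \<longlongrightarrow> LZ) at_top"
    and "LZ \<noteq> 0" and "0 < c"
  shows "((\<lambda>ts. 1 / Z (ts / c) * X (ts / 2 / c) * cnj (Y (ts / 2 / c))) \<longlongrightarrow> LX * cnj LY / LZ) at_top"
proof -
  define e where "e ts = exp (pi * (ts / 2 / c) * E)" for ts
  have half: "filterlim (\<lambda>ts. ts / 2 / c) at_top at_top"
    using filterlim_divide_const_at_top[of "2 * c"] \<open>0 < c\<close> by (simp add: field_simps)
  have X': "((\<lambda>ts. of_real (e ts) * X (ts / 2 / c)) \<longlongrightarrow> LX) at_top"
    unfolding e_def by (rule filterlim_compose[OF X half])
  have Y': "((\<lambda>ts. of_real (e ts) * Y (ts / 2 / c)) \<longlongrightarrow> LY) at_top"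
    unfolding e_def by (rule filterlim_compose[OF Y half])
  have "e ts ^ 2 = exp (pi * (ts / c) * E)" for ts
    by (simp add: e_def power2_eq_square flip: exp_add)
  then have Z': "((\<lambda>ts. of_real (e ts ^ 2) * Z (ts / c)) \<longlongrightarrow> LZ) at_top"
    using filterlim_compose[OF Z filterlim_divide_const_at_top[OF \<open>0 < c\<close>]] by simp
  have "1 / Z (ts / c) * X (ts / 2 / c) * cnj (Y (ts / 2 / c))
      = of_real (e ts) * X (ts / 2 / c) * cnj (of_real (e ts) * Y (ts / 2 / c))
        / (of_real (e ts ^ 2) * Z (ts / c))" for ts
    by (cases "Z (ts / c) = 0") (simp_all add: e_def field_simps power2_eq_square)
  then show ?thesis
    using tendsto_mult[OF X' tendsto_cnj[OF Y']] Z' \<open>LZ \<noteq> 0\<close> by (simp add: tendsto_divide)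
qed

lemma exp_two_pi_i_eq_cis:
  "exp (2 * of_real pi * \<i> * of_real J * of_real w) = cis (2 * pi * J * w)"
  "exp (- 2 * of_real pi * \<i> * of_real J * of_real w) = cis (2 * pi * J * - w)"
  unfolding cis_conv_exp by (simp_all add: mult_ac)

lemma Mfun_A_eq:
  "Mfun A N r j x t = twisted_theta2 (calN A N) (Jfun A j) (xi r x) (t / (2 * pi * r\<^sup>2))"
  unfolding Mfun_def Let_def twisted_theta2_def tau_def root_type.case exp_two_pi_i_eq_cis ..

lemma Mfun_theta1_eq:
  assumes "R \<in> {B, Bv}"
  shows "Mfun R N r j x t = twisted_theta1 (calN R N) (Jfun R j) (xi r x) (t / (2 * pi * r\<^sup>2))
                          - twisted_theta1 (calN R N) (Jfun R j) (- xi r x) (t / (2 * pi * r\<^sup>2))"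
  using assms unfolding Mfun_def Let_def twisted_theta1_def tau_def exp_two_pi_i_eq_cis
  by auto

lemma Mfun_theta2_odd_eq:
  assumes "R \<in> {C, Cv, BC}"
  shows "Mfun R N r j x t = twisted_theta2 (calN R N) (Jfun R j) (xi r x) (t / (2 * pi * r\<^sup>2))
                          - twisted_theta2 (calN R N) (Jfun R j) (- xi r x) (t / (2 * pi * r\<^sup>2))"
  using assms unfolding Mfun_def Let_def twisted_theta2_def tau_def exp_two_pi_i_eq_cis
  by auto

lemma Mfun_D_eq:
  "Mfun D N r j x t = twisted_theta2 (calN D N) (Jfun D j) (xi r x) (t / (2 * pi * r\<^sup>2))
                    + twisted_theta2 (calN D N) (Jfun D j) (- xi r x) (t / (2 * pi * r\<^sup>2))"
  unfolding Mfun_def Let_def twisted_theta2_def tau_def exp_two_pi_i_eq_cis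
  by simp

lemma mfun_eq:
  "mfun R N r j ts = of_real ((if R \<in> {B, Bv, D} \<and> j = 1 \<or> R = D \<and> j = N then 4 else 2) * pi * r)
                      * twisted_theta2 (calN R N) (Jfun R j) 0 (ts / (2 * pi * r\<^sup>2))"
  unfolding mfun_def Let_def twisted_theta2_def tau_def
  by (cases R) (auto simp: Jfun_def mult_ac)

lemma kernel_term_tendsto:
  fixes F :: "real \<Rightarrow> real \<Rightarrow> complex" and G :: "real \<Rightarrow> complex"
  assumes r: "0 < r" and LJ: "1 \<le> L" "0 \<le> J" "J < L"
    and M: "\<And>z t. Mfun R N r n z t = F (xi r z) (t / (2 * pi * r\<^sup>2))"
    and m: "\<And>ts. mfun R N r n ts = of_real \<kappa> * twisted_theta2 L J 0 (ts / (2 * pi * r\<^sup>2))"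
    and F: "\<And>w. ((\<lambda>s. of_real (exp (pi * s * ((J - L / 2)\<^sup>2 - J\<^sup>2))) * F w s) \<longlongrightarrow> G w) at_top"
    and "\<kappa> \<noteq> 0"
  shows "((\<lambda>ts. 1 / mfun R N r n ts * Mfun R N r n x (ts / 2) * cnj (Mfun R N r n y (ts - ts / 2)))
           \<longlongrightarrow> G (xi r x) * cnj (G (xi r y)) / (of_real \<kappa> * (1 + (if J = 0 then 1 else 0)))) at_top"
proof -
  have "((\<lambda>s. of_real (exp (pi * s * ((J - L / 2)\<^sup>2 - J\<^sup>2))) * twisted_theta2 L J 0 s)
      \<longlongrightarrow> 1 + (if J = 0 then 1 else 0)) at_top"
    using twisted_theta2_tendsto[OF LJ, of 0] by (cases "J = 0") simp_all
  then have "((\<lambda>s. of_real (exp (pi * s * ((J - L / 2)\<^sup>2 - J\<^sup>2))) * (of_real \<kappa> * twisted_theta2 L J 0 s))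
      \<longlongrightarrow> of_real \<kappa> * (1 + (if J = 0 then 1 else 0))) at_top"
    by (simp add: mult.left_commute tendsto_mult_left)
  from half_time_ratio_tendsto[OF F F this _ _, of "2 * pi * r\<^sup>2"] show ?thesis
    using r \<open>\<kappa> \<noteq> 0\<close> by (simp add: M m)
qed

text \<open>The frequency a = J - L/2 of the dominant Gaussian mode of the n-th function M_n.\<close>

definition mode_freq :: "root_type \<Rightarrow> nat \<Rightarrow> nat \<Rightarrow> real" where
  "mode_freq R N n = Jfun R n - calN R N / 2"

lemma two_pi_mult_xi: "0 < r \<Longrightarrow> 2 * pi * a * xi r x = a * x / r"
  by (simp add: xi_def)

lemma kernel_term_A_tendsto:
  assumes r: "0 < r" and n: "n \<in> {1..N}"
  shows "((\<lambda>ts. 1 / mfun A N r n ts * Mfun A N r n x (ts / 2) * cnj (Mfun A N r n y (ts - ts / 2)))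
           \<longlongrightarrow> cis (mode_freq A N n * (x - y) / r) / of_real (2 * pi * r)) at_top"
proof -
  define L J where "L = calN A N" and "J = Jfun A n"
  have LJ: "1 \<le> L" "0 \<le> J" "J < L" and "J \<noteq> 0"
    using n by (auto simp: L_def J_def calN_def Jfun_def)
  have M: "Mfun A N r n z t = twisted_theta2 L J (xi r z) (t / (2 * pi * r\<^sup>2))" for z t
    by (simp add: Mfun_A_eq L_def J_def)
  have m: "mfun A N r n ts = of_real (2 * pi * r) * twisted_theta2 L J 0 (ts / (2 * pi * r\<^sup>2))" for ts
    by (simp add: mfun_eq L_def J_def)
  have F: "((\<lambda>s. of_real (exp (pi * s * ((J - L / 2)\<^sup>2 - J\<^sup>2))) * twisted_theta2 L J w s)
      \<longlongrightarrow> cis (2 * pi * (J - L / 2) * w)) at_top" for w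
    using twisted_theta2_tendsto[OF LJ, of w] \<open>J \<noteq> 0\<close> by simp
  have mf: "mode_freq A N n = J - L / 2"
    by (simp add: mode_freq_def L_def J_def)
  have "2 * pi * r \<noteq> 0"
    using r by simp
  from kernel_term_tendsto[where F = "twisted_theta2 L J", OF r LJ M m F this,
      unfolded two_pi_mult_xi[OF r] mf[symmetric]] show ?thesis
    using \<open>J \<noteq> 0\<close> by (simp add: cis_cnj cis_mult diff_divide_distrib right_diff_distrib)
qed

lemma kernel_term_theta1_tendsto:
  assumes R: "R \<in> {B, Bv}" and r: "0 < r" and n: "n \<in> {1..N}"
  shows "((\<lambda>ts. 1 / mfun R N r n ts * Mfun R N r n x (ts / 2) * cnj (Mfun R N r n y (ts - ts / 2)))
           \<longlongrightarrow> of_real (4 * sin (mode_freq R N n * x / r) * sin (mode_freq R N n * y / r) / (2 * pi * r))) at_top"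
proof -
  define L J where "L = calN R N" and "J = Jfun R n"
  have LJ: "1 \<le> L" "0 \<le> J" "J < L"
    using R n by (auto simp: L_def J_def calN_def Jfun_def)
  have M: "Mfun R N r n z t = twisted_theta1 L J (xi r z) (t / (2 * pi * r\<^sup>2))
      - twisted_theta1 L J (- xi r z) (t / (2 * pi * r\<^sup>2))" for z t
    using Mfun_theta1_eq[OF R] by (simp add: L_def J_def)
  have m: "mfun R N r n ts
      = of_real (2 * (1 + (if J = 0 then 1 else 0)) * pi * r) * twisted_theta2 L J 0 (ts / (2 * pi * r\<^sup>2))" for ts
    using R n by (auto simp: mfun_eq L_def J_def Jfun_def)
  have mf: "mode_freq R N n = J - L / 2"
    by (simp add: mode_freq_def L_def J_def)
  have "2 * (1 + (if J = 0 then 1 else 0)) * pi * r \<noteq> 0"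
    using r by simp
  from kernel_term_tendsto[where F = "\<lambda>w s. twisted_theta1 L J w s - twisted_theta1 L J (- w) s",
      OF r LJ M m twisted_theta1_odd_tendsto[OF LJ] this,
      unfolded two_pi_mult_xi[OF r] mf[symmetric]] show ?thesis
    by (cases "J = 0") (simp_all add: field_simps)
qed

lemma kernel_term_theta2_odd_tendsto:
  assumes R: "R \<in> {C, Cv, BC}" and r: "0 < r" and n: "n \<in> {1..N}"
  shows "((\<lambda>ts. 1 / mfun R N r n ts * Mfun R N r n x (ts / 2) * cnj (Mfun R N r n y (ts - ts / 2)))
           \<longlongrightarrow> of_real (4 * sin (mode_freq R N n * x / r) * sin (mode_freq R N n * y / r) / (2 * pi * r))) at_top"
proof -
  define L J where "L = calN R N" and "J = Jfun R n"
  have LJ: "1 \<le> L" "0 < J" "J < L"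
    using R n by (auto simp: L_def J_def calN_def Jfun_def)
  have M: "Mfun R N r n z t = twisted_theta2 L J (xi r z) (t / (2 * pi * r\<^sup>2))
      - twisted_theta2 L J (- xi r z) (t / (2 * pi * r\<^sup>2))" for z t
    using Mfun_theta2_odd_eq[OF R] by (simp add: L_def J_def)
  have m: "mfun R N r n ts = of_real (2 * pi * r) * twisted_theta2 L J 0 (ts / (2 * pi * r\<^sup>2))" for ts
    using R by (auto simp: mfun_eq L_def J_def)
  have mf: "mode_freq R N n = J - L / 2"
    by (simp add: mode_freq_def L_def J_def)
  have "2 * pi * r \<noteq> 0"
    using r by simp
  from kernel_term_tendsto[where F = "\<lambda>w s. twisted_theta2 L J w s - twisted_theta2 L J (- w) s",
      OF r LJ(1) less_imp_le[OF LJ(2)] LJ(3) M m twisted_theta2_odd_tendsto[OF LJ] this,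
      unfolded two_pi_mult_xi[OF r] mf[symmetric]] show ?thesis
    using LJ(2) by (simp add: field_simps)
qed

lemma kernel_term_D_tendsto:
  assumes r: "0 < r" and N: "2 \<le> N" and n: "n \<in> {1..N}"
  shows "((\<lambda>ts. 1 / mfun D N r n ts * Mfun D N r n x (ts / 2) * cnj (Mfun D N r n y (ts - ts / 2)))
           \<longlongrightarrow> of_real (4 * cos (mode_freq D N n * x / r) * cos (mode_freq D N n * y / r)
                        / ((if n = N then 4 else 2) * pi * r))) at_top"
proof -
  define L J where "L = calN D N" and "J = Jfun D n"
  have LJ: "1 \<le> L" "0 \<le> J" "J < L"
    using N n by (auto simp: L_def J_def calN_def Jfun_def)
  have M: "Mfun D N r n z t = twisted_theta2 L J (xi r z) (t / (2 * pi * r\<^sup>2))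
      + twisted_theta2 L J (- xi r z) (t / (2 * pi * r\<^sup>2))" for z t
    using Mfun_D_eq by (simp add: L_def J_def)
  have m: "mfun D N r n ts = of_real ((if n = N then 4 else 2 * (1 + (if J = 0 then 1 else 0))) * pi * r)
      * twisted_theta2 L J 0 (ts / (2 * pi * r\<^sup>2))" for ts
    using N n by (auto simp: mfun_eq L_def J_def Jfun_def)
  have mf: "mode_freq D N n = J - L / 2"
    by (simp add: mode_freq_def L_def J_def)
  have "n = N \<Longrightarrow> J \<noteq> 0"
    using N by (simp add: J_def Jfun_def)
  moreover have "(if n = N then 4 else 2 * (1 + (if J = 0 then 1 else 0))) * pi * r \<noteq> 0"
    using r by simp
  ultimately show ?thesis
    using kernel_term_tendsto[where F = "\<lambda>w s. twisted_theta2 L J w s + twisted_theta2 L J (- w) s",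
      OF r LJ M m twisted_theta2_even_tendsto[OF LJ], unfolded two_pi_mult_xi[OF r] mf[symmetric]]
    by (cases "J = 0"; cases "n = N") (simp_all add: field_simps)
qed

lemma kernel_A_tendsto:
  assumes "0 < r"
  shows "((\<lambda>ts. kernel_t A N r (ts / 2) ts x y) \<longlongrightarrow> complex_of_real (K_A N r x y)) at_top"
proof -
  have "cis (mode_freq A N n * (x - y) / r) = cis ((2 * real n - 1 - real N) * ((x - y) / (2 * r)))" for n
    by (rule arg_cong[where f = cis])
      (use assms in \<open>simp add: mode_freq_def Jfun_def calN_def field_simps\<close>)
  then have "(\<Sum>n=1..N. cis (mode_freq A N n * (x - y) / r) / of_real (2 * pi * r))
      = (\<Sum>n=1..N. cis ((2 * real n - 1 - real N) * ((x - y) / (2 * r)))) / of_real (2 * pi * r)"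
    by (simp only: sum_divide_distrib)
  also have "\<dots> = complex_of_real (K_A N r x y)"
    unfolding sum_cis_symmetric_progression by (simp add: K_A_def)
  finally have "(\<Sum>n=1..N. cis (mode_freq A N n * (x - y) / r) / of_real (2 * pi * r))
      = complex_of_real (K_A N r x y)" .
  moreover have "((\<lambda>ts. kernel_t A N r (ts / 2) ts x y)
      \<longlongrightarrow> (\<Sum>n=1..N. cis (mode_freq A N n * (x - y) / r) / of_real (2 * pi * r))) at_top"
    unfolding kernel_t_def by (intro tendsto_sum kernel_term_A_tendsto assms)
  ultimately show ?thesis
    by simp
qed

lemma kernel_odd_tendsto:
  assumes R: "R \<in> {B, Bv, C, Cv, BC}" and r: "0 < r"
  shows "((\<lambda>ts. kernel_t R N r (ts / 2) ts x y) \<longlongrightarrow> complex_of_real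
           (\<Sum>n=1..N. 4 * sin (mode_freq R N n * x / r) * sin (mode_freq R N n * y / r) / (2 * pi * r))) at_top"
proof -
  have "((\<lambda>ts. 1 / mfun R N r n ts * Mfun R N r n x (ts / 2) * cnj (Mfun R N r n y (ts - ts / 2)))
      \<longlongrightarrow> of_real (4 * sin (mode_freq R N n * x / r) * sin (mode_freq R N n * y / r) / (2 * pi * r))) at_top"
    if n: "n \<in> {1..N}" for n
  proof (cases "R \<in> {B, Bv}")
    case True
    then show ?thesis
      by (rule kernel_term_theta1_tendsto[OF _ r n])
  next
    case False
    with R have "R \<in> {C, Cv, BC}"
      by auto
    then show ?thesis
      by (rule kernel_term_theta2_odd_tendsto[OF _ r n])
  qed
  then show ?thesis
    unfolding kernel_t_def of_real_sum by (rule tendsto_sum)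
qed

lemma kernel_D_tendsto:
  assumes "0 < r" and "2 \<le> N"
  shows "((\<lambda>ts. kernel_t D N r (ts / 2) ts x y) \<longlongrightarrow> complex_of_real (K_D N r x y)) at_top"
proof -
  define f where "f n = 4 * cos (mode_freq D N n * x / r) * cos (mode_freq D N n * y / r)" for n
  have "f N = 4"
    by (simp add: f_def mode_freq_def Jfun_def calN_def field_simps)
  then have "f n / ((if n = N then 4 else 2) * pi * r) = f n / (2 * pi * r) - (if n = N then 1 / (pi * r) else 0)"
    for n
    using assms(1) by (auto simp: field_simps)
  then have "(\<Sum>n=1..N. f n / ((if n = N then 4 else 2) * pi * r))
      = (\<Sum>n=1..N. f n / (2 * pi * r)) - 1 / (pi * r)"
    using assms(2) by (simp add: sum_subtractf)
  also have "\<dots> = K_D N r x y"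
  proof -
    have "mode_freq D N n = real n - real N" for n
      by (simp add: mode_freq_def Jfun_def calN_def field_simps)
    then show ?thesis
      using K_D_eq_sum[of r N x y] assms(1) by (simp add: f_def)
  qed
  finally have "(\<Sum>n=1..N. f n / ((if n = N then 4 else 2) * pi * r)) = K_D N r x y" .
  moreover have "((\<lambda>ts. kernel_t D N r (ts / 2) ts x y)
      \<longlongrightarrow> complex_of_real (\<Sum>n=1..N. f n / ((if n = N then 4 else 2) * pi * r))) at_top"
    unfolding kernel_t_def of_real_sum f_def by (intro tendsto_sum kernel_term_D_tendsto assms)
  ultimately show ?thesis
    by simp
qed

lemma limit_kernel_odd_eq_sum:
  assumes "R \<in> {B, Bv, C, Cv, BC}" and "r \<noteq> 0"
  shows "limit_kernel R N r x y
           = (\<Sum>n=1..N. 4 * sin (mode_freq R N n * x / r) * sin (mode_freq R N n * y / r) / (2 * pi * r))"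
proof -
  have "mode_freq R N n = real n - real N - (if R \<in> {B, Cv, BC} then 1/2 else 1)" for n
    using assms(1) by (auto simp: mode_freq_def Jfun_def calN_def field_simps)
  then show ?thesis
    using assms K_B_eq_sum[OF assms(2)] K_C_eq_sum[OF assms(2)] by (auto simp: limit_kernel_def)
qed

theorem corollary3p4:
  fixes R :: root_type and N :: nat and r x y :: real
  assumes "0 < r" and "1 \<le> N" and "R = D \<Longrightarrow> 2 \<le> N"
    and "x \<in> state_space R r" and "y \<in> state_space R r"
  shows "((\<lambda>ts. kernel_t R N r (ts / 2) ts x y)
            \<longlongrightarrow> complex_of_real (limit_kernel R N r x y)) at_top"
proof -
  \<comment> \<open>the convergence holds for all real x, y and all N, so only 0 < r and the bound for D_N are used\<close>
  consider "R = A" | "R \<in> {B, Bv, C, Cv, BC}" | "R = D"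
    by (cases R) auto
  then show ?thesis
  proof cases
    case 1
    then show ?thesis
      using kernel_A_tendsto[OF assms(1)] by (simp add: limit_kernel_def)
  next
    case 2
    have "r \<noteq> 0"
      using assms(1) by simp
    show ?thesis
      unfolding limit_kernel_odd_eq_sum[OF 2 \<open>r \<noteq> 0\<close>] by (rule kernel_odd_tendsto[OF 2 assms(1)])
  next
    case 3
    then show ?thesis
      using kernel_D_tendsto[OF assms(1) assms(3)[OF 3]] by (simp add: limit_kernel_def)
  qed
qed

end
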